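(* Let $(S,+)$ be an infinite commutative semigroup admitting a family $(A_x)_{x\in S}$ of finite subsets of $S$ such that for every $x\in S$: $x\in A_x$; $x\notin S+(S\setminus A_x)$; and $|S\setminus\{y\in S : A_x\subseteq A_y\}|<|S|$. Let $M\subseteq S$ with $|M|=|S|$, and for each $x\in M$ let $B_x\subseteq S$ satisfy $B_x\subseteq A_x\subseteq B_x+B_x$. Then every diagonal $D$ of the family $(B_x)_{x\in M}$ satisfies $D+D=S$. Moreover, if $s\in\mathbb{N}\cup\{\infty\}$ and $s(B_x)\le s$ for all $x\in M$, then $s(D)\le s$.
   Context: For $X,Y\subseteq S$, $X+Y=\{u+v: u\in X, v\in Y\}$. A set $D$ is a diagonal of the family $(B_x)_{x\in M}$ if for every finite set $F$, the set $\{x\in M : F\cap D=F\cap B_x\}$ has cardinality $|M|$. For $X\subseteq S$ and $n\in S$, $r(X,n)=|\{(u,v)\in X\times X : u+v=n\}|$ and $s(X)=\sup_{n\in S} r(X,n)$. *)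

theory Defs
  imports Main "HOL-Library.Set_Algebras" "HOL-Library.Equipollence" "HOL-Library.Extended_Nat"
begin

definition is_diagonal :: "'a set \<Rightarrow> ('b \<Rightarrow> 'a set) \<Rightarrow> 'b set \<Rightarrow> bool" where
  "is_diagonal D B M \<longleftrightarrow>
     (\<forall>F. finite F \<longrightarrow> {x \<in> M. F \<inter> D = F \<inter> B x} \<approx> M)"

definition rep :: "'a::plus set \<Rightarrow> 'a \<Rightarrow> enat" where
  "rep X n = (let P = {(u, v). u \<in> X \<and> v \<in> X \<and> u + v = n} in
              if finite P then enat (card P) else \<infinity>)"

definition srep :: "'a::plus set \<Rightarrow> enat" where
  "srep X = (SUP n. rep X n)"

end

theory Submission
  imports Defs
begin

text \<open>The condition \<open>n \<notin> S + (S - A n)\<close> forces both summands of every representation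
  \<open>n = u + v\<close> into the finite set \<open>A n\<close>, so whether \<open>n \<in> D + D\<close>, and the value of \<open>r(D, n)\<close>,
  depend only on \<open>A n \<inter> D\<close>. The diagonal agrees with \<open>B x\<close> on \<open>A n\<close> for \<open>|S|\<close> many indices
  \<open>x\<close>, while fewer than \<open>|S|\<close> indices violate \<open>A n \<subseteq> A x\<close>; for an index satisfying both,
  \<open>n \<in> A x \<subseteq> B x + B x\<close> and \<open>r(D, n) = r(B x, n) \<le> s(B x)\<close>.\<close>

lemma summands_mem_if_not_mem_plus_compl:
  fixes n u v :: "'a::ab_semigroup_add"
  assumes "n \<notin> UNIV + (UNIV - A)" and "u + v = n"
  shows "u \<in> A" and "v \<in> A"
proof -
  show "v \<in> A"
    using assms by (metis Diff_iff UNIV_I set_plus_intro)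
  then show "u \<in> A"
    using assms by (metis Diff_iff UNIV_I add.commute set_plus_intro)
qed

lemma rep_cong_on_summands:
  assumes "\<And>u v. u + v = n \<Longrightarrow> u \<in> C \<and> v \<in> C"
    and "C \<inter> X = C \<inter> Y"
  shows "rep X n = rep Y n"
proof -
  have "{(u, v). u \<in> X \<and> v \<in> X \<and> u + v = n} = {(u, v). u \<in> Y \<and> v \<in> Y \<and> u + v = n}"
    using assms by blast
  then show ?thesis
    by (simp add: rep_def)
qed

lemma rep_le_srep: "rep X n \<le> srep X"
  unfolding srep_def by (rule SUP_upper) simp

lemma eqpoll_not_subset_lesspoll:
  assumes "X \<approx> U" and "Y \<prec> U"
  shows "\<not> X \<subseteq> Y"
proof
  assume "X \<subseteq> Y"
  then have "X \<prec> U"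
    using assms(2) by (meson subset_imp_lepoll lesspoll_trans1)
  then show False
    using assms(1) by (meson eqpoll_sym eq_lesspoll_trans lesspoll_not_refl)
qed

lemma diagonal_agrees_on_finite_within:
  fixes M P :: "'b set"
  assumes "is_diagonal D B M" and "M \<approx> (UNIV :: 'b set)"
    and "finite F" and "UNIV - P \<prec> (UNIV :: 'b set)"
  shows "\<exists>x\<in>M. x \<in> P \<and> F \<inter> D = F \<inter> B x"
proof -
  have "{x \<in> M. F \<inter> D = F \<inter> B x} \<approx> (UNIV :: 'b set)"
    using assms(1-3) unfolding is_diagonal_def by (meson eqpoll_trans)
  then have "\<not> {x \<in> M. F \<inter> D = F \<inter> B x} \<subseteq> UNIV - P"
    using assms(4) by (rule eqpoll_not_subset_lesspoll)
  then show ?thesis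
    by blast
qed

theorem mainTheorem7:
  fixes A :: "'a::ab_semigroup_add \<Rightarrow> 'a set"
    and B :: "'a \<Rightarrow> 'a set"
    and M D :: "'a set"
    and s :: enat
  assumes inf: "infinite (UNIV :: 'a set)"
    and A_fin: "\<And>x. finite (A x)"
    and A_mem: "\<And>x. x \<in> A x"
    and A_irr: "\<And>x. x \<notin> (UNIV :: 'a set) + (UNIV - A x)"
    and A_small: "\<And>x. (UNIV - {y. A x \<subseteq> A y}) \<prec> (UNIV :: 'a set)"
    and M_card: "M \<approx> (UNIV :: 'a set)"
    and B_sub: "\<And>x. x \<in> M \<Longrightarrow> B x \<subseteq> A x"
    and A_sub: "\<And>x. x \<in> M \<Longrightarrow> A x \<subseteq> B x + B x"
    and diag: "is_diagonal D B M"
  shows "D + D = (UNIV :: 'a set)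
         \<and> ((\<forall>x\<in>M. srep (B x) \<le> s) \<longrightarrow> srep D \<le> s)"
proof -
  have summands: "u \<in> A n \<and> v \<in> A n" if "u + v = n" for u v n
    using summands_mem_if_not_mem_plus_compl[OF A_irr that] by blast
  have agree: "\<exists>x\<in>M. A n \<subseteq> A x \<and> A n \<inter> D = A n \<inter> B x" for n
    using diagonal_agrees_on_finite_within[OF diag M_card A_fin A_small] by blast
  have "n \<in> D + D" for n
  proof -
    obtain x where x: "x \<in> M" "A n \<subseteq> A x" and eq: "A n \<inter> D = A n \<inter> B x"
      using agree by blast
    have "n \<in> B x + B x"
      using A_mem x A_sub by blast
    then obtain u v where "u \<in> B x" "v \<in> B x" "n = u + v"
      by (auto elim: set_plus_elim)
    with summands eq show ?thesis
      by (blast intro: set_plus_intro)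
  qed
  moreover have "srep D \<le> s" if bound: "\<forall>x\<in>M. srep (B x) \<le> s"
    unfolding srep_def
  proof (rule SUP_least)
    fix n
    obtain x where "x \<in> M" and eq: "A n \<inter> D = A n \<inter> B x"
      using agree by blast
    have "rep D n = rep (B x) n"
      using summands eq by (rule rep_cong_on_summands)
    also have "\<dots> \<le> srep (B x)"
      by (rule rep_le_srep)
    also have "\<dots> \<le> s"
      using bound \<open>x \<in> M\<close> by blast
    finally show "rep D n \<le> s" .
  qed
  ultimately show ?thesis
    by blast
qed

end
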